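(* Let $P$ be a probability distribution on $\mathsf{X}_N$ that has a density $p$ with respect to $\mu$. (a) Let $G=(N,E)$ be a DAG with topological ordering $\mathcal{O}$, let $A\subseteq\mathrm{roots}(G)$, and let $H=(N,E\cup E_A)$ with $E_A=\{(s,t):s,t\in A,\ \mathcal{O}(s)<\mathcal{O}(t)\}$. If there exists a Markov kernel $K\in\mathcal{K}^G$ that is a version of the conditional distribution $P_{N\setminus A\mid A}$, then $P\in\mathcal{P}^H$. (b) Let $G=(N,E)$ be a DAG, let $A\subseteq N$ be such that all parents in $G$ of nodes in $A$ are themselves in $A$, and let $H=(N,E\setminus E_A)$ with $E_A=\{(s,t)\in E: s,t\in A\}$. If $P\in\mathcal{P}^G$, then there exists a Markov kernel $K\in\mathcal{K}^H$ that is a version of the conditional distribution $P_{N\setminus A\mid A}$.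
   Context: DAG: finite directed graph without directed cycles; $\mathrm{pa}_G(s)$ are the parents of $s$; $\mathrm{roots}(G)=\{s:\mathrm{pa}_G(s)=\emptyset\}$. A topological ordering is a bijection $\mathcal{O}:N\to\{1,\dots,|N|\}$ with $(s,t)\in E\Rightarrow\mathcal{O}(s)<\mathcal{O}(t)$. Each node $s$ has a state space $\mathsf{X}_s$ (finite set with counting measure, or finite-dimensional real vector space with Lebesgue measure $\mu_s$), $\mathsf{X}_A=\times_{s\in A}\mathsf{X}_s$, $\mu=\otimes_s\mu_s$. A kernel function for $s$ in $G$ is a measurable $k^s:\mathsf{X}_s\times\mathsf{X}_{\mathrm{pa}_G(s)}\to\mathbb{R}_{\ge0}$ integrating to $1$ in $x_s$ w.r.t. $\mu_s$. $\mathcal{P}^G$ = set of probability distributions on $\mathsf{X}_N$ with a $\mu$-density $p(x)=\prod_{s\in N}k^s(x_s\mid x_{\mathrm{pa}_G(s)})$. For $A\subseteq N$ such that all parents in $G$ of nodes of $A$ lie in $A$, $\mathcal{K}^G$ is the set of Markov kernels $K$ from $\mathsf{X}_A$ to $\mathsf{X}_{N\setminus A}$ for which there are kernel functions $(k^s)_{s\in N\setminus A}$ such that for every $x_A$, $K(\cdot,x_A)$ has density $\prod_{s\in N\setminus A}k^s(x_s\mid x_{\mathrm{pa}_G(s)})$. A Markov kernel $K$ is a version of $P_{N\setminus A\mid A}$ if $P(\mathsf{B}\times\mathsf{C})=\int_{\mathsf{C}}K(\mathsf{B},x_A)\,dP_A(x_A)$ for all measurable $\mathsf{B}\subseteq\mathsf{X}_{N\setminus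 A}$, $\mathsf{C}\subseteq\mathsf{X}_A$, where $P_A$ is the marginal of $P$ on $\mathsf{X}_A$. *)

theory Defs
  imports "HOL-Probability.Probability"
begin

text \<open>State spaces: a finite set with counting measure, or (an injective copy of)
  R^d with Lebesgue (Borel) measure, realised as the product of d copies of lborel.\<close>
definition state_space :: "'x measure \<Rightarrow> bool" where
  "state_space Ms \<longleftrightarrow>
     (\<exists>F. finite F \<and> Ms = count_space F) \<or>
     (\<exists>(d::nat) (f::(nat \<Rightarrow> real) \<Rightarrow> 'x).
        inj_on f (space (Pi\<^sub>M {..<d} (\<lambda>_. lborel))) \<and>
        Ms = embed_measure (Pi\<^sub>M {..<d} (\<lambda>_. lborel)) f)"

definition is_dag :: "'n set \<Rightarrow> ('n \<times> 'n) set \<Rightarrow> bool" where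
  "is_dag N E \<longleftrightarrow> finite N \<and> E \<subseteq> N \<times> N \<and> acyclic E"

definition pa :: "('n \<times> 'n) set \<Rightarrow> 'n \<Rightarrow> 'n set" where
  "pa E s = {t. (t, s) \<in> E}"

definition roots :: "'n set \<Rightarrow> ('n \<times> 'n) set \<Rightarrow> 'n set" where
  "roots N E = {s \<in> N. pa E s = {}}"

definition topo_order :: "'n set \<Rightarrow> ('n \<times> 'n) set \<Rightarrow> ('n \<Rightarrow> nat) \<Rightarrow> bool" where
  "topo_order N E ord \<longleftrightarrow> bij_betw ord N {1..card N} \<and> (\<forall>s t. (s, t) \<in> E \<longrightarrow> ord s < ord t)"

text \<open>Kernel function for node s in G=(N,E): k v y = k^s(v | y_{pa(s)}).\<close>
definition kernel_fun :: "('n \<Rightarrow> 'x measure) \<Rightarrow> ('n \<times> 'n) set \<Rightarrow> 'n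
    \<Rightarrow> ('x \<Rightarrow> ('n \<Rightarrow> 'x) \<Rightarrow> real) \<Rightarrow> bool" where
  "kernel_fun M E s k \<longleftrightarrow>
     (\<lambda>(v, y). k v y) \<in> borel_measurable (M s \<Otimes>\<^sub>M Pi\<^sub>M (pa E s) M) \<and>
     (\<forall>v \<in> space (M s). \<forall>y \<in> space (Pi\<^sub>M (pa E s) M). 0 \<le> k v y) \<and>
     (\<forall>y \<in> space (Pi\<^sub>M (pa E s) M). (\<integral>\<^sup>+ v. ennreal (k v y) \<partial>M s) = 1)"

definition in_PG :: "('n \<Rightarrow> 'x measure) \<Rightarrow> 'n set \<Rightarrow> ('n \<times> 'n) set
    \<Rightarrow> ('n \<Rightarrow> 'x) measure \<Rightarrow> bool" where
  "in_PG M N E P \<longleftrightarrow> prob_space P \<and>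
     (\<exists>k. (\<forall>s\<in>N. kernel_fun M E s (k s)) \<and>
          P = density (Pi\<^sub>M N M)
                (\<lambda>x. \<Prod>s\<in>N. ennreal (k s (x s) (restrict x (pa E s)))))"

definition in_KG :: "('n \<Rightarrow> 'x measure) \<Rightarrow> 'n set \<Rightarrow> ('n \<times> 'n) set \<Rightarrow> 'n set
    \<Rightarrow> (('n \<Rightarrow> 'x) \<Rightarrow> ('n \<Rightarrow> 'x) measure) \<Rightarrow> bool" where
  "in_KG M N E A K \<longleftrightarrow>
     K \<in> measurable (Pi\<^sub>M A M) (prob_algebra (Pi\<^sub>M (N - A) M)) \<and>
     (\<exists>k. (\<forall>s\<in>N - A. kernel_fun M E s (k s)) \<and>
          (\<forall>xa \<in> space (Pi\<^sub>M A M).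
             K xa = density (Pi\<^sub>M (N - A) M)
                (\<lambda>y. \<Prod>s\<in>N - A. ennreal (k s (y s)
                        (restrict (merge A (N - A) (xa, y)) (pa E s))))))"

definition cond_version :: "('n \<Rightarrow> 'x measure) \<Rightarrow> 'n set \<Rightarrow> 'n set
    \<Rightarrow> ('n \<Rightarrow> 'x) measure \<Rightarrow> (('n \<Rightarrow> 'x) \<Rightarrow> ('n \<Rightarrow> 'x) measure) \<Rightarrow> bool" where
  "cond_version M N A P K \<longleftrightarrow>
     K \<in> measurable (Pi\<^sub>M A M) (prob_algebra (Pi\<^sub>M (N - A) M)) \<and>
     (\<forall>B \<in> sets (Pi\<^sub>M (N - A) M). \<forall>C \<in> sets (Pi\<^sub>M A M).
        emeasure P {x \<in> space (Pi\<^sub>M N M). restrict x (N - A) \<in> B \<and> restrict x A \<in> C}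
        = (\<integral>\<^sup>+ xa. emeasure (K xa) B * indicator C xa
             \<partial>(distr P (Pi\<^sub>M A M) (\<lambda>x. restrict x A))))"

end

theory Submission
  imports Defs
begin

text \<open>
  (b) If P factorises over G and A is closed under parents, then for fixed x_A the factors of
  the nodes outside A integrate to 1 (integrate out a sink of the DAG, one at a time), so they
  are the density of a Markov kernel K; the factors of the nodes in A depend on x_A only and
  form the marginal density of x_A. Hence P = P_A \<otimes> K, i.e. K is a version of P_{N-A|A}.

  (a) Conversely, the marginal density of x_A disintegrates along the topological order
  (chain rule: a density is its last conditional density times the marginal of the other
  coordinates), which yields kernel functions for the complete DAG on A. Their product,
  multiplied with the density of K, gives the same measure as P on measurable rectangles,
  hence it is a density of P.
\<close>

section \<open>Kernel functions with arbitrary parent sets and their products\<close>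

definition kernel_fun_on :: "('n \<Rightarrow> 'x measure) \<Rightarrow> 'n set \<Rightarrow> 'n
    \<Rightarrow> ('x \<Rightarrow> ('n \<Rightarrow> 'x) \<Rightarrow> real) \<Rightarrow> bool" where
  "kernel_fun_on M S s k \<longleftrightarrow>
     (\<lambda>(v, y). k v y) \<in> borel_measurable (M s \<Otimes>\<^sub>M Pi\<^sub>M S M) \<and>
     (\<forall>v \<in> space (M s). \<forall>y \<in> space (Pi\<^sub>M S M). 0 \<le> k v y) \<and>
     (\<forall>y \<in> space (Pi\<^sub>M S M). (\<integral>\<^sup>+ v. ennreal (k v y) \<partial>M s) = 1)"

definition kernel_prod :: "('n \<Rightarrow> 'x \<Rightarrow> ('n \<Rightarrow> 'x) \<Rightarrow> real) \<Rightarrow> ('n \<Rightarrow> 'n set)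
    \<Rightarrow> 'n set \<Rightarrow> ('n \<Rightarrow> 'x) \<Rightarrow> ennreal" where
  "kernel_prod k S D x = (\<Prod>s\<in>D. ennreal (k s (x s) (restrict x (S s))))"

lemma kernel_fun_iff_kernel_fun_on: "kernel_fun M E s k \<longleftrightarrow> kernel_fun_on M (pa E s) s k"
  unfolding kernel_fun_def kernel_fun_on_def ..

lemma in_PG_iff_kernel_prod:
  "in_PG M N E P \<longleftrightarrow> prob_space P \<and>
     (\<exists>k. (\<forall>s\<in>N. kernel_fun_on M (pa E s) s (k s)) \<and> P = density (Pi\<^sub>M N M) (kernel_prod k (pa E) N))"
  unfolding in_PG_def kernel_prod_def kernel_fun_iff_kernel_fun_on ..

lemma kernel_prod_merge_right:
  assumes "A \<inter> B = {}"
  shows "kernel_prod k S B (merge A B (x, y)) = (\<Prod>s\<in>B. ennreal (k s (y s) (restrict (merge A B (x, y)) (S s))))"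
  unfolding kernel_prod_def using assms by (intro prod.cong) (auto simp: merge_def)

lemma in_KG_iff_kernel_prod:
  "in_KG M N E A K \<longleftrightarrow> K \<in> Pi\<^sub>M A M \<rightarrow>\<^sub>M prob_algebra (Pi\<^sub>M (N - A) M) \<and>
     (\<exists>k. (\<forall>s\<in>N - A. kernel_fun_on M (pa E s) s (k s)) \<and>
          (\<forall>xa \<in> space (Pi\<^sub>M A M).
             K xa = density (Pi\<^sub>M (N - A) M) (\<lambda>y. kernel_prod k (pa E) (N - A) (merge A (N - A) (xa, y)))))"
  unfolding in_KG_def kernel_fun_iff_kernel_fun_on kernel_prod_merge_right[OF Diff_disjoint] ..

lemma kernel_fun_on_measurable:
  assumes "kernel_fun_on M S s k"
  shows "(\<lambda>(v, y). k v y) \<in> borel_measurable (M s \<Otimes>\<^sub>M Pi\<^sub>M S M)"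
  using assms unfolding kernel_fun_on_def by blast

lemma measurable_kernel_fun_on_slice:
  assumes "kernel_fun_on M S s k" "y \<in> space (Pi\<^sub>M S M)"
  shows "(\<lambda>v. k v y) \<in> borel_measurable (M s)"
  using measurable_Pair1[OF kernel_fun_on_measurable[OF assms(1)] assms(2)] by simp

lemma measurable_kernel_fun_on_comp:
  assumes "kernel_fun_on M S s k" "f \<in> L \<rightarrow>\<^sub>M Pi\<^sub>M I M" "S \<subseteq> I" "s \<in> I"
  shows "(\<lambda>z. k (f z s) (restrict (f z) S)) \<in> borel_measurable L"
proof -
  have "(\<lambda>z. (f z s, restrict (f z) S)) \<in> L \<rightarrow>\<^sub>M M s \<Otimes>\<^sub>M Pi\<^sub>M S M"
    using measurable_compose[OF assms(2) measurable_component_singleton[OF assms(4)]]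
      measurable_compose[OF assms(2) measurable_restrict_subset[OF assms(3)]]
    by (rule measurable_Pair)
  from measurable_compose[OF this kernel_fun_on_measurable[OF assms(1)]] show ?thesis by simp
qed

lemma borel_measurable_kernel_prod:
  assumes "\<forall>s\<in>D. kernel_fun_on M (S s) s (k s)" "f \<in> L \<rightarrow>\<^sub>M Pi\<^sub>M I M"
    "D \<subseteq> I" "\<forall>s\<in>D. S s \<subseteq> I"
  shows "(\<lambda>z. kernel_prod k S D (f z)) \<in> borel_measurable L"
  unfolding kernel_prod_def
proof (rule borel_measurable_prod_ennreal)
  fix s assume "s \<in> D"
  then show "(\<lambda>z. ennreal (k s (f z s) (restrict (f z) (S s)))) \<in> borel_measurable L"
    using measurable_kernel_fun_on_comp[of M "S s" s "k s" f L I] assms by auto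
qed

lemma kernel_prod_merge_split:
  assumes "A \<inter> B = {}" "finite A" "finite B" "\<forall>s\<in>A. S s \<subseteq> A"
  shows "kernel_prod k S (A \<union> B) (merge A B (x, y)) = kernel_prod k S A x * kernel_prod k S B (merge A B (x, y))"
proof -
  have "restrict (merge A B (x, y)) (S s) = restrict x (S s)" if "s \<in> A" for s
    using assms(4) that by (auto simp: restrict_def merge_def fun_eq_iff)
  then have "kernel_prod k S A (merge A B (x, y)) = kernel_prod k S A x"
    unfolding kernel_prod_def by (intro prod.cong) (auto simp: merge_def)
  then show ?thesis
    unfolding kernel_prod_def by (simp add: prod.union_disjoint[OF assms(2,3,1)])
qed

lemma merge_complement:
  assumes "A \<subseteq> N" "xa \<in> space (Pi\<^sub>M A M)" "y \<in> space (Pi\<^sub>M (N - A) M)"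
  shows "merge A (N - A) (xa, y) \<in> space (Pi\<^sub>M N M)"
    and "restrict (merge A (N - A) (xa, y)) A = xa"
    and "restrict (merge A (N - A) (xa, y)) (N - A) = y"
proof -
  have "merge A (N - A) (xa, y) \<in> space (Pi\<^sub>M (A \<union> (N - A)) M)"
    using measurable_space[OF measurable_merge, of "(xa, y)" A M "N - A"] assms(2,3)
    by (simp add: space_pair_measure)
  then show "merge A (N - A) (xa, y) \<in> space (Pi\<^sub>M N M)"
    using assms(1) by (simp add: Un_absorb1)
  have "xa \<in> extensional A" "y \<in> extensional (N - A)"
    using assms(2,3) by (auto simp: space_PiM PiE_def)
  then show "restrict (merge A (N - A) (xa, y)) A = xa" "restrict (merge A (N - A) (xa, y)) (N - A) = y"
    by (simp_all add: extensional_restrict)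
qed

lemma measurable_merge_complement:
  "A \<subseteq> N \<Longrightarrow> merge A (N - A) \<in> Pi\<^sub>M A M \<Otimes>\<^sub>M Pi\<^sub>M (N - A) M \<rightarrow>\<^sub>M Pi\<^sub>M N M"
  using measurable_merge[of A "N - A" M] by (simp add: Un_absorb1)

lemma PiE_eq_cylinder:
  assumes "A \<subseteq> N" "\<forall>i\<in>N. Y i \<subseteq> space (M i)"
  shows "Pi\<^sub>E N Y =
    {x \<in> space (Pi\<^sub>M N M). restrict x (N - A) \<in> Pi\<^sub>E (N - A) Y \<and> restrict x A \<in> Pi\<^sub>E A Y}"
  using assms by (auto simp: space_PiM PiE_iff extensional_def)

lemma measurable_merge_complement_Pair:
  assumes "A \<subseteq> N" "xa \<in> space (Pi\<^sub>M A M)"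
  shows "(\<lambda>y. merge A (N - A) (xa, y)) \<in> Pi\<^sub>M (N - A) M \<rightarrow>\<^sub>M Pi\<^sub>M N M"
  using measurable_compose[OF measurable_Pair1'[OF assms(2)] measurable_merge_complement[OF assms(1)]] .

lemma acyclic_ex_sink:
  assumes "finite D" "D \<noteq> {}" "acyclic E"
  obtains t where "t \<in> D" "\<forall>s\<in>D. (t, s) \<notin> E"
proof -
  have "wf ((E \<inter> D \<times> D)\<inverse>)"
    using assms by (intro finite_acyclic_wf_converse acyclic_subset[OF assms(3)]) auto
  then obtain t where "t \<in> D" "\<And>s. (s, t) \<in> (E \<inter> D \<times> D)\<inverse> \<Longrightarrow> s \<notin> D"
    using assms(2) unfolding wf_eq_minimal by blast
  with that show ?thesis by blast
qed

lemma kernel_prod_merge_update_sink: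
  assumes "finite D" "t \<in> D" "C \<inter> D = {}" "\<forall>s\<in>D. t \<notin> S s"
  shows "kernel_prod k S D (merge C D (z, y(t := v))) =
    ennreal (k t v (restrict (merge C (D - {t}) (z, y)) (S t))) *
    kernel_prod k S (D - {t}) (merge C (D - {t}) (z, y))"
proof -
  have merge_upd: "merge C D (z, y(t := v)) s = (if s = t then v else merge C (D - {t}) (z, y) s)"
    if "s \<in> D" for s
    using that assms(3) by (auto simp: merge_def)
  have "restrict (merge C D (z, y(t := v))) (S s) = restrict (merge C (D - {t}) (z, y)) (S s)"
    if "s \<in> D" for s
    using assms(4) that by (auto simp: restrict_def merge_def fun_eq_iff)
  with merge_upd assms(2) show ?thesis
    unfolding kernel_prod_def prod.remove[OF assms(1,2)]
    by (intro arg_cong2[where f="(*)"] prod.cong refl) simp_all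
qed

lemma kernel_prod_insert_greatest:
  fixes ord :: "'i \<Rightarrow> nat"
  assumes "finite I" "t \<notin> I" "\<forall>s\<in>I. ord s < ord t"
  shows "kernel_prod (k(t := kt)) (\<lambda>s. {u\<in>insert t I. ord u < ord s}) (insert t I) x =
    ennreal (kt (x t) (restrict x I)) * kernel_prod k (\<lambda>s. {u\<in>I. ord u < ord s}) I (restrict x I)"
proof -
  have pred: "{u\<in>insert t I. ord u < ord s} = (if s = t then I else {u\<in>I. ord u < ord s})"
    if "s \<in> insert t I" for s
    using assms(3) that by force
  then have "kernel_prod k (\<lambda>s. {u\<in>I. ord u < ord s}) I (restrict x I) =
      kernel_prod (k(t := kt)) (\<lambda>s. {u\<in>insert t I. ord u < ord s}) I x"
    unfolding kernel_prod_def using assms(2)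
    by (intro prod.cong refl) (auto simp: restrict_restrict Int_absorb1)
  with pred[of t] assms(1,2) show ?thesis
    unfolding kernel_prod_def by (simp add: prod.insert)
qed

lemma kernel_fun_on_insert_greatest:
  fixes ord :: "'i \<Rightarrow> nat"
  assumes "\<forall>s\<in>I. kernel_fun_on M {u\<in>I. ord u < ord s} s (k s)" "kernel_fun_on M I t kt"
    "\<forall>s\<in>I. ord s < ord t"
  shows "\<forall>s\<in>insert t I. kernel_fun_on M {u\<in>insert t I. ord u < ord s} s ((k(t := kt)) s)"
proof
  fix s assume s: "s \<in> insert t I"
  have "{u\<in>insert t I. ord u < ord t} = I"
    using assms(3) by force
  moreover have "{u\<in>insert t I. ord u < ord s} = {u\<in>I. ord u < ord s}" if "s \<in> I"
    using assms(3) that by force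
  ultimately show "kernel_fun_on M {u\<in>insert t I. ord u < ord s} s ((k(t := kt)) s)"
    using assms(1,2) s by (cases "s = t") auto
qed

lemma measurable_density_prob_algebra:
  assumes "sigma_finite_measure N"
    and f: "(\<lambda>(x, y). f x y) \<in> borel_measurable (L \<Otimes>\<^sub>M N)"
    and f_1: "\<And>x. x \<in> space L \<Longrightarrow> (\<integral>\<^sup>+ y. f x y \<partial>N) = 1"
  shows "(\<lambda>x. density N (f x)) \<in> L \<rightarrow>\<^sub>M prob_algebra N"
proof (rule measurable_prob_algebraI)
  interpret N: sigma_finite_measure N by fact
  have f_x: "f x \<in> borel_measurable N" if "x \<in> space L" for x
    using measurable_Pair2[OF f that] by simp
  show prob: "prob_space (density N (f x))" if "x \<in> space L" for x
  proof
    show "emeasure (density N (f x)) (space (density N (f x))) = 1"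
      using f_1[OF that] f_x[OF that] by (auto simp: emeasure_density intro!: nn_integral_cong)
  qed
  show "(\<lambda>x. density N (f x)) \<in> L \<rightarrow>\<^sub>M subprob_algebra N"
  proof (rule measurable_subprob_algebra)
    fix X assume X: "X \<in> sets N"
    have "(\<lambda>x. \<integral>\<^sup>+ y. f x y * indicator X y \<partial>N) \<in> borel_measurable L"
      using f X by (intro N.borel_measurable_nn_integral) (simp add: split_beta')
    then show "(\<lambda>x. emeasure (density N (f x)) X) \<in> borel_measurable L"
      using X f_x by (subst measurable_cong[where g="\<lambda>x. \<integral>\<^sup>+ y. f x y * indicator X y \<partial>N"])
        (auto simp: emeasure_density)
  qed (use prob prob_space_imp_subprob_space in auto)
qed

section \<open>Disintegration of a density along an ordering\<close>

text \<open>g is a fallback density, used where the marginal of q vanishes or is infinite.\<close>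

definition cond_density :: "('i \<Rightarrow> 'a measure) \<Rightarrow> 'i \<Rightarrow> (('i \<Rightarrow> 'a) \<Rightarrow> ennreal)
    \<Rightarrow> ('a \<Rightarrow> real) \<Rightarrow> 'a \<Rightarrow> ('i \<Rightarrow> 'a) \<Rightarrow> real" where
  "cond_density M t q g v y =
     (let m = \<integral>\<^sup>+ w. q (y(t := w)) \<partial>M t
      in if 0 < m \<and> m < \<infinity> then enn2real (q (y(t := v)) / m) else g v)"

context product_sigma_finite
begin

lemma borel_measurable_marginal_insert:
  assumes "q \<in> borel_measurable (Pi\<^sub>M (insert t I) M)"
  shows "(\<lambda>y. \<integral>\<^sup>+ w. q (y(t := w)) \<partial>M t) \<in> borel_measurable (Pi\<^sub>M I M)"
proof -
  have "(\<lambda>(y, w). q (y(t := w))) \<in> borel_measurable (Pi\<^sub>M I M \<Otimes>\<^sub>M M t)"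
    using measurable_compose[OF measurable_add_dim assms] by (simp add: split_beta')
  then show ?thesis
    by (rule sigma_finite_measure.borel_measurable_nn_integral[OF sigma_finite_measures])
qed

lemma nn_integral_restrict_insert:
  assumes "finite I" "t \<notin> I" "q \<in> borel_measurable (Pi\<^sub>M (insert t I) M)" "f \<in> borel_measurable (Pi\<^sub>M I M)"
  shows "(\<integral>\<^sup>+ x. f (restrict x I) * q x \<partial>Pi\<^sub>M (insert t I) M) =
    (\<integral>\<^sup>+ y. f y * (\<integral>\<^sup>+ w. q (y(t := w)) \<partial>M t) \<partial>Pi\<^sub>M I M)"
proof -
  have "(\<lambda>x. f (restrict x I) * q x) \<in> borel_measurable (Pi\<^sub>M (insert t I) M)"
    using measurable_compose[OF measurable_restrict_subset[OF subset_insertI] assms(4)] assms(3)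
    by (rule borel_measurable_times_ennreal)
  then have "(\<integral>\<^sup>+ x. f (restrict x I) * q x \<partial>Pi\<^sub>M (insert t I) M) =
      (\<integral>\<^sup>+ y. (\<integral>\<^sup>+ w. f (restrict (y(t := w)) I) * q (y(t := w)) \<partial>M t) \<partial>Pi\<^sub>M I M)"
    by (rule product_nn_integral_insert[OF assms(1,2)])
  also have "\<dots> = (\<integral>\<^sup>+ y. f y * (\<integral>\<^sup>+ w. q (y(t := w)) \<partial>M t) \<partial>Pi\<^sub>M I M)"
  proof (rule nn_integral_cong)
    fix y assume y: "y \<in> space (Pi\<^sub>M I M)"
    then have "restrict (y(t := w)) I = y" for w
      using assms(2) by (auto simp: space_PiM PiE_def extensional_def restrict_def)
    moreover have "(\<lambda>w. q (y(t := w))) \<in> borel_measurable (M t)"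
      using measurable_compose[OF measurable_component_update[OF y assms(2)] assms(3)] .
    ultimately show "(\<integral>\<^sup>+ w. f (restrict (y(t := w)) I) * q (y(t := w)) \<partial>M t) =
        f y * (\<integral>\<^sup>+ w. q (y(t := w)) \<partial>M t)"
      by (simp add: nn_integral_cmult)
  qed
  finally show ?thesis .
qed

lemma AE_restrict_insert:
  assumes "finite I" "t \<notin> I" "AE y in Pi\<^sub>M I M. R y"
  shows "AE x in Pi\<^sub>M (insert t I) M. R (restrict x I)"
proof -
  obtain Z where Z: "{y \<in> space (Pi\<^sub>M I M). \<not> R y} \<subseteq> Z" "emeasure (Pi\<^sub>M I M) Z = 0" "Z \<in> sets (Pi\<^sub>M I M)"
    using assms(3) by (rule AE_E)
  have "(\<integral>\<^sup>+ x. indicator Z (restrict x I) * 1 \<partial>Pi\<^sub>M (insert t I) M) =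
      (\<integral>\<^sup>+ y. indicator Z y * emeasure (M t) (space (M t)) \<partial>Pi\<^sub>M I M)"
    using nn_integral_restrict_insert[OF assms(1,2), of "\<lambda>_. 1" "indicator Z"] Z(3) by simp
  also have "\<dots> = 0"
    using Z(2,3) by (simp add: nn_integral_multc)
  finally have "AE x in Pi\<^sub>M (insert t I) M. indicator Z (restrict x I) = (0 :: ennreal)"
    using Z(3) measurable_restrict_subset[of I "insert t I" M]
    by (subst nn_integral_0_iff_AE[symmetric]) auto
  then show ?thesis using AE_space
  proof eventually_elim
    case (elim x)
    then have "restrict x I \<in> space (Pi\<^sub>M I M)"
      using measurable_space[OF measurable_restrict_subset[of I "insert t I" M]] by blast
    with elim(1) Z(1) show "R (restrict x I)" by (auto simp: indicator_def split: if_splits)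
  qed
qed

lemma borel_measurable_update_swap:
  assumes "q \<in> borel_measurable (Pi\<^sub>M (insert t I) M)"
  shows "(\<lambda>(v, y). q (y(t := v))) \<in> borel_measurable (M t \<Otimes>\<^sub>M Pi\<^sub>M I M)"
proof -
  have "(\<lambda>p. (snd p, fst p)) \<in> M t \<Otimes>\<^sub>M Pi\<^sub>M I M \<rightarrow>\<^sub>M Pi\<^sub>M I M \<Otimes>\<^sub>M M t"
    by measurable
  from measurable_compose[OF measurable_compose[OF this measurable_add_dim] assms]
  show ?thesis by (simp add: split_beta')
qed

lemma ex_prob_density_component:
  assumes "finite I" "t \<notin> I" "q \<in> borel_measurable (Pi\<^sub>M (insert t I) M)"
    "(\<integral>\<^sup>+ x. q x \<partial>Pi\<^sub>M (insert t I) M) = 1"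
  obtains g where "g \<in> borel_measurable (M t)" "\<forall>v\<in>space (M t). 0 \<le> g v" "(\<integral>\<^sup>+ v. ennreal (g v) \<partial>M t) = 1"
proof -
  define h where "h v = (\<integral>\<^sup>+ y. q (y(t := v)) \<partial>Pi\<^sub>M I M)" for v
  interpret I: sigma_finite_measure "Pi\<^sub>M I M" using sigma_finite[OF assms(1)] .
  have h: "h \<in> borel_measurable (M t)"
    unfolding h_def using borel_measurable_update_swap[OF assms(3)]
    by (intro I.borel_measurable_nn_integral) (simp add: split_beta')
  have h_1: "(\<integral>\<^sup>+ v. h v \<partial>M t) = 1"
    using product_nn_integral_insert_rev[OF assms(1-3)] assms(4) by (simp add: h_def)
  then have "AE v in M t. h v \<noteq> \<infinity>" using nn_integral_PInf_AE[OF h] by simp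
  then have "(\<integral>\<^sup>+ v. ennreal (enn2real (h v)) \<partial>M t) = 1"
    using h_1 by (subst nn_integral_cong_AE[where v=h]) (auto simp: less_top)
  with h show thesis by (intro that[of "\<lambda>v. enn2real (h v)"]) auto
qed

lemma kernel_fun_on_cond_density:
  assumes "t \<notin> I" "q \<in> borel_measurable (Pi\<^sub>M (insert t I) M)"
    and g: "g \<in> borel_measurable (M t)" "\<forall>v\<in>space (M t). 0 \<le> g v" "(\<integral>\<^sup>+ v. ennreal (g v) \<partial>M t) = 1"
  shows "kernel_fun_on M I t (cond_density M t q g)"
  unfolding kernel_fun_on_def
proof (intro conjI ballI)
  have "(\<lambda>p. \<integral>\<^sup>+ w. q ((snd p)(t := w)) \<partial>M t) \<in> borel_measurable (M t \<Otimes>\<^sub>M Pi\<^sub>M I M)"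
    using measurable_compose[OF measurable_snd borel_measurable_marginal_insert[OF assms(2)]] .
  moreover have "(\<lambda>p. q ((snd p)(t := fst p))) \<in> borel_measurable (M t \<Otimes>\<^sub>M Pi\<^sub>M I M)"
    using borel_measurable_update_swap[OF assms(2)] by (simp add: split_beta')
  ultimately show "(\<lambda>(v, y). cond_density M t q g v y) \<in> borel_measurable (M t \<Otimes>\<^sub>M Pi\<^sub>M I M)"
    using g(1) unfolding cond_density_def Let_def split_beta' by measurable
next
  fix v y assume "v \<in> space (M t)" "y \<in> space (Pi\<^sub>M I M)"
  then show "0 \<le> cond_density M t q g v y" using g(2) by (simp add: cond_density_def Let_def)
next
  fix y assume y: "y \<in> space (Pi\<^sub>M I M)"
  define m where "m = (\<integral>\<^sup>+ w. q (y(t := w)) \<partial>M t)"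
  show "(\<integral>\<^sup>+ v. ennreal (cond_density M t q g v y) \<partial>M t) = 1"
  proof (cases "0 < m \<and> m < \<infinity>")
    case True
    have q_y: "(\<lambda>v. q (y(t := v))) \<in> borel_measurable (M t)"
      using measurable_compose[OF measurable_component_update[OF y assms(1)] assms(2)] .
    then have "AE v in M t. q (y(t := v)) \<noteq> \<infinity>"
      using True by (intro nn_integral_PInf_AE) (auto simp: m_def)
    then have "(\<integral>\<^sup>+ v. ennreal (cond_density M t q g v y) \<partial>M t) = (\<integral>\<^sup>+ v. q (y(t := v)) / m \<partial>M t)"
    proof (rule nn_integral_cong_AE[OF eventually_mono])
      fix v assume "q (y(t := v)) \<noteq> \<infinity>"
      then have "q (y(t := v)) / m \<noteq> \<infinity>" using True by (auto simp: ennreal_divide_eq_top_iff)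
      then show "ennreal (cond_density M t q g v y) = q (y(t := v)) / m"
        using True by (simp add: cond_density_def m_def[symmetric] less_top)
    qed
    also have "\<dots> = m / m" by (simp add: nn_integral_divide[OF q_y] m_def)
    also have "\<dots> = 1" using True by (intro ennreal_divide_self) auto
    finally show ?thesis .
  next
    case False
    show ?thesis
      using g(3) unfolding cond_density_def Let_def m_def[symmetric] if_not_P[OF False] .
  qed
qed

lemma AE_marginal_eq_0_imp_eq_0:
  assumes "finite I" "t \<notin> I" "q \<in> borel_measurable (Pi\<^sub>M (insert t I) M)"
  shows "AE x in Pi\<^sub>M (insert t I) M. (\<integral>\<^sup>+ w. q ((restrict x I)(t := w)) \<partial>M t) = 0 \<longrightarrow> q x = 0"
proof -
  define m where "m y = (\<integral>\<^sup>+ w. q (y(t := w)) \<partial>M t)" for y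
  define Z where "Z = {y \<in> space (Pi\<^sub>M I M). m y = 0}"
  have Z: "Z \<in> sets (Pi\<^sub>M I M)"
    unfolding Z_def m_def using borel_measurable_marginal_insert[OF assms(3)] by measurable
  have "(\<lambda>x. indicator Z (restrict x I) * q x) \<in> borel_measurable (Pi\<^sub>M (insert t I) M)"
    using measurable_compose[OF measurable_restrict_subset[OF subset_insertI] borel_measurable_indicator[OF Z]]
      assms(3) by (rule borel_measurable_times_ennreal)
  moreover have "(\<integral>\<^sup>+ x. indicator Z (restrict x I) * q x \<partial>Pi\<^sub>M (insert t I) M) =
      (\<integral>\<^sup>+ y. indicator Z y * m y \<partial>Pi\<^sub>M I M)"
    unfolding m_def using Z by (intro nn_integral_restrict_insert[OF assms]) simp
  moreover have "(\<integral>\<^sup>+ y. indicator Z y * m y \<partial>Pi\<^sub>M I M) = 0"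
    by (subst nn_integral_cong[where v="\<lambda>_. 0"]) (auto simp: Z_def indicator_def)
  ultimately have "AE x in Pi\<^sub>M (insert t I) M. indicator Z (restrict x I) * q x = 0"
    by (simp add: nn_integral_0_iff_AE)
  then show ?thesis using AE_space
  proof eventually_elim
    case (elim x)
    then have "restrict x I \<in> space (Pi\<^sub>M I M)"
      using measurable_space[OF measurable_restrict_subset[of I "insert t I" M]] by blast
    with elim(1) show ?case by (auto simp: Z_def m_def)
  qed
qed

lemma AE_eq_cond_density_mult_marginal:
  assumes "finite I" "t \<notin> I" "q \<in> borel_measurable (Pi\<^sub>M (insert t I) M)"
    "(\<integral>\<^sup>+ x. q x \<partial>Pi\<^sub>M (insert t I) M) = 1"
  shows "AE x in Pi\<^sub>M (insert t I) M.
    q x = ennreal (cond_density M t q g (x t) (restrict x I)) * (\<integral>\<^sup>+ w. q ((restrict x I)(t := w)) \<partial>M t)"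
proof -
  have "AE x in Pi\<^sub>M (insert t I) M. q x \<noteq> \<infinity>"
    using nn_integral_PInf_AE[OF assms(3)] assms(4) by simp
  moreover have "AE y in Pi\<^sub>M I M. (\<integral>\<^sup>+ w. q (y(t := w)) \<partial>M t) \<noteq> \<infinity>"
    using nn_integral_PInf_AE[OF borel_measurable_marginal_insert[OF assms(3)]]
      product_nn_integral_insert[OF assms(1-3)] assms(4) by simp
  then have "AE x in Pi\<^sub>M (insert t I) M. (\<integral>\<^sup>+ w. q ((restrict x I)(t := w)) \<partial>M t) \<noteq> \<infinity>"
    by (rule AE_restrict_insert[OF assms(1,2)])
  ultimately show ?thesis using AE_marginal_eq_0_imp_eq_0[OF assms(1-3)] AE_space
  proof eventually_elim
    case (elim x)
    define m where "m = (\<integral>\<^sup>+ w. q ((restrict x I)(t := w)) \<partial>M t)"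
    have "(restrict x I)(t := x t) = x"
      using elim(4) assms(2) by (auto simp: space_PiM PiE_def extensional_def fun_eq_iff)
    show ?case
    proof (cases "m = 0")
      case False
      then have m: "0 < m \<and> m < \<infinity>" using elim(2) by (simp add: m_def less_top zero_less_iff_neq_zero)
      moreover have "q x / m \<noteq> \<infinity>" using elim(1) m by (auto simp: ennreal_divide_eq_top_iff)
      ultimately have "ennreal (cond_density M t q g (x t) (restrict x I)) * m = q x / m * m"
        using \<open>(restrict x I)(t := x t) = x\<close> by (simp add: cond_density_def m_def[symmetric] less_top)
      also have "\<dots> = q x * (m / m)" by (simp add: ennreal_divide_times)
      also have "\<dots> = q x" using m by (subst ennreal_divide_self) auto
      finally show ?thesis by (simp add: m_def)
    qed (use elim(3) in \<open>simp add: m_def\<close>)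
  qed
qed

lemma density_chain_rule:
  fixes ord :: "'i \<Rightarrow> nat"
  assumes "finite A" "inj_on ord A" "q \<in> borel_measurable (Pi\<^sub>M A M)" "(\<integral>\<^sup>+ x. q x \<partial>Pi\<^sub>M A M) = 1"
  obtains k where "\<forall>s\<in>A. kernel_fun_on M {u\<in>A. ord u < ord s} s (k s)"
    "AE x in Pi\<^sub>M A M. q x = kernel_prod k (\<lambda>s. {u\<in>A. ord u < ord s}) A x"
proof -
  have "\<exists>k. (\<forall>s\<in>A. kernel_fun_on M {u\<in>A. ord u < ord s} s (k s)) \<and>
    (AE x in Pi\<^sub>M A M. q x = kernel_prod k (\<lambda>s. {u\<in>A. ord u < ord s}) A x)"
    using assms
  proof (induction A arbitrary: q rule: finite_ranking_induct[where f = ord])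
    case empty
    then have "q (\<lambda>_. undefined) = 1" by (simp add: nn_integral_empty)
    then show ?case by (intro exI[of _ undefined] conjI AE_I2) (auto simp: space_PiM_empty kernel_prod_def)
  next
    case (insert t I)
    show ?case
    proof (cases "t \<in> I")
      case True
      then show ?thesis using insert unfolding insert_absorb[OF True] by simp
    next
      case t: False
      have ord_lt: "\<forall>s\<in>I. ord s < ord t"
      proof
        fix s assume "s \<in> I"
        moreover have "ord s \<noteq> ord t" using inj_onD[OF insert.prems(1), of s t] t \<open>s \<in> I\<close> by auto
        ultimately show "ord s < ord t" using insert.hyps(2) by (simp add: order.not_eq_order_implies_strict)
      qed
      define m where "m y = (\<integral>\<^sup>+ w. q (y(t := w)) \<partial>M t)" for y
      obtain g where g: "g \<in> borel_measurable (M t)" "\<forall>v\<in>space (M t). 0 \<le> g v"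
          "(\<integral>\<^sup>+ v. ennreal (g v) \<partial>M t) = 1"
        using ex_prob_density_component[OF insert.hyps(1) t insert.prems(2,3)] .
      have "m \<in> borel_measurable (Pi\<^sub>M I M)"
        unfolding m_def by (rule borel_measurable_marginal_insert[OF insert.prems(2)])
      moreover have "(\<integral>\<^sup>+ y. m y \<partial>Pi\<^sub>M I M) = 1"
        unfolding m_def product_nn_integral_insert[OF insert.hyps(1) t insert.prems(2), symmetric]
        by (rule insert.prems(3))
      moreover have "inj_on ord I" using insert.prems(1) by (simp add: inj_on_insert)
      ultimately obtain k where k: "\<forall>s\<in>I. kernel_fun_on M {u\<in>I. ord u < ord s} s (k s)"
          and m_eq: "AE y in Pi\<^sub>M I M. m y = kernel_prod k (\<lambda>s. {u\<in>I. ord u < ord s}) I y"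
        using insert.IH by blast
      show ?thesis
      proof (intro exI conjI)
        show "\<forall>s\<in>insert t I. kernel_fun_on M {u\<in>insert t I. ord u < ord s} s ((k(t := cond_density M t q g)) s)"
          using kernel_fun_on_insert_greatest[OF k kernel_fun_on_cond_density[OF t insert.prems(2) g] ord_lt] .
        show "AE x in Pi\<^sub>M (insert t I) M.
            q x = kernel_prod (k(t := cond_density M t q g)) (\<lambda>s. {u\<in>insert t I. ord u < ord s}) (insert t I) x"
          using AE_eq_cond_density_mult_marginal[OF insert.hyps(1) t insert.prems(2,3), of g]
            AE_restrict_insert[OF insert.hyps(1) t m_eq]
        proof eventually_elim
          case (elim x)
          show ?case
            unfolding kernel_prod_insert_greatest[OF insert.hyps(1) t ord_lt] elim(2)[symmetric] m_def
            by (rule elim(1))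
        qed
      qed
    qed
  qed
  with that show thesis by blast
qed

section \<open>Conditional versions from factorised densities\<close>

lemma product_nn_integral_fold_complement:
  assumes "finite N" "A \<subseteq> N" "h \<in> borel_measurable (Pi\<^sub>M N M)"
  shows "(\<integral>\<^sup>+ x. h x \<partial>Pi\<^sub>M N M) =
    (\<integral>\<^sup>+ xa. (\<integral>\<^sup>+ y. h (merge A (N - A) (xa, y)) \<partial>Pi\<^sub>M (N - A) M) \<partial>Pi\<^sub>M A M)"
  using product_nn_integral_fold[of A "N - A" h] assms finite_subset[OF assms(2)]
  by (simp add: Un_absorb1)

lemma nn_integral_kernel_prod_merge:
  assumes "finite D" "acyclic E" "C \<inter> D = {}" "\<forall>s\<in>D. kernel_fun_on M (pa E s) s (k s)"
    "\<forall>s\<in>D. pa E s \<subseteq> C \<union> D" "z \<in> space (Pi\<^sub>M C M)"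
  shows "(\<integral>\<^sup>+ y. kernel_prod k (pa E) D (merge C D (z, y)) \<partial>Pi\<^sub>M D M) = 1"
  using assms
proof (induction D rule: finite_psubset_induct)
  case (psubset D)
  show ?case
  proof (cases "D = {}")
    case True
    then show ?thesis by (simp add: PiM_empty kernel_prod_def)
  next
    case False
    \<comment> \<open>No other factor depends on a sink, so its factor integrates out first.\<close>
    obtain t where t: "t \<in> D" "\<forall>s\<in>D. (t, s) \<notin> E"
      using acyclic_ex_sink[OF psubset.hyps(1) False psubset.prems(1)] .
    define D' where "D' = D - {t}"
    have D: "D = insert t D'" "t \<notin> D'" "finite D'" "D' \<subset> D"
      using t psubset.hyps(1) by (auto simp: D'_def)
    have t_pa: "\<forall>s\<in>D. t \<notin> pa E s"
      using t by (auto simp: pa_def)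
    have "\<forall>s\<in>D'. pa E s \<subseteq> C \<union> D'"
      using psubset.prems(4) t_pa by (auto simp: D'_def)
    with psubset.prems D have IH: "(\<integral>\<^sup>+ y. kernel_prod k (pa E) D' (merge C D' (z, y)) \<partial>Pi\<^sub>M D' M) = 1"
      by (intro psubset.IH) auto
    have "(\<lambda>y. merge C D (z, y)) \<in> Pi\<^sub>M D M \<rightarrow>\<^sub>M Pi\<^sub>M (C \<union> D) M"
      using measurable_compose[OF measurable_Pair1'[OF psubset.prems(5)] measurable_merge] .
    then have "(\<lambda>y. kernel_prod k (pa E) D (merge C D (z, y))) \<in> borel_measurable (Pi\<^sub>M (insert t D') M)"
      using psubset.prems(3,4) D(1) by (intro borel_measurable_kernel_prod) auto
    then have "(\<integral>\<^sup>+ y. kernel_prod k (pa E) D (merge C D (z, y)) \<partial>Pi\<^sub>M D M) =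
        (\<integral>\<^sup>+ y. (\<integral>\<^sup>+ v. kernel_prod k (pa E) D (merge C D (z, y(t := v))) \<partial>M t) \<partial>Pi\<^sub>M D' M)"
      unfolding D(1) by (rule product_nn_integral_insert[OF D(3,2)])
    also have "\<dots> = (\<integral>\<^sup>+ y. kernel_prod k (pa E) D' (merge C D' (z, y)) \<partial>Pi\<^sub>M D' M)"
    proof (rule nn_integral_cong)
      fix y assume y: "y \<in> space (Pi\<^sub>M D' M)"
      let ?w = "restrict (merge C D' (z, y)) (pa E t)"
      have "merge C D' (z, y) \<in> space (Pi\<^sub>M (C \<union> D') M)"
        using psubset.prems(5) y by (auto simp: space_pair_measure intro!: measurable_space[OF measurable_merge])
      then have w: "?w \<in> space (Pi\<^sub>M (pa E t) M)"
        using psubset.prems(4) t t_pa D(1) by (intro measurable_space[OF measurable_restrict_subset]) auto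
      have k_t: "kernel_fun_on M (pa E t) t (k t)" using psubset.prems(3) t(1) by blast
      show "(\<integral>\<^sup>+ v. kernel_prod k (pa E) D (merge C D (z, y(t := v))) \<partial>M t) =
          kernel_prod k (pa E) D' (merge C D' (z, y))"
        unfolding kernel_prod_merge_update_sink[OF psubset.hyps(1) t(1) psubset.prems(2) t_pa] D'_def[symmetric]
        using measurable_kernel_fun_on_slice[OF k_t w] k_t w
        by (simp add: nn_integral_multc kernel_fun_on_def)
    qed
    finally show ?thesis using IH by simp
  qed
qed

lemma measurable_kernel_prod_density:
  assumes "finite N" "A \<subseteq> N" "acyclic E"
    "\<forall>s\<in>N - A. kernel_fun_on M (pa E s) s (k s)" "\<forall>s\<in>N - A. pa E s \<subseteq> N"
  shows "(\<lambda>xa. density (Pi\<^sub>M (N - A) M) (\<lambda>y. kernel_prod k (pa E) (N - A) (merge A (N - A) (xa, y))))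
    \<in> Pi\<^sub>M A M \<rightarrow>\<^sub>M prob_algebra (Pi\<^sub>M (N - A) M)"
proof (rule measurable_density_prob_algebra)
  show "sigma_finite_measure (Pi\<^sub>M (N - A) M)" using assms(1) by (intro sigma_finite) auto
  have "(\<lambda>p. kernel_prod k (pa E) (N - A) (merge A (N - A) p)) \<in> borel_measurable (Pi\<^sub>M A M \<Otimes>\<^sub>M Pi\<^sub>M (N - A) M)"
    using assms(5) by (intro borel_measurable_kernel_prod[OF assms(4) measurable_merge_complement[OF assms(2)]]) auto
  then show "(\<lambda>(xa, y). kernel_prod k (pa E) (N - A) (merge A (N - A) (xa, y)))
      \<in> borel_measurable (Pi\<^sub>M A M \<Otimes>\<^sub>M Pi\<^sub>M (N - A) M)"
    by (simp add: split_beta')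
  show "(\<integral>\<^sup>+ y. kernel_prod k (pa E) (N - A) (merge A (N - A) (xa, y)) \<partial>Pi\<^sub>M (N - A) M) = 1"
    if "xa \<in> space (Pi\<^sub>M A M)" for xa
    using assms that by (intro nn_integral_kernel_prod_merge) auto
qed

lemma emeasure_density_cylinder:
  assumes "finite N" "A \<subseteq> N" "T \<in> borel_measurable (Pi\<^sub>M N M)"
    and split: "\<And>xa y. xa \<in> space (Pi\<^sub>M A M) \<Longrightarrow> y \<in> space (Pi\<^sub>M (N - A) M) \<Longrightarrow>
      T (merge A (N - A) (xa, y)) = Q xa * F xa y"
    and F: "\<And>xa. xa \<in> space (Pi\<^sub>M A M) \<Longrightarrow> F xa \<in> borel_measurable (Pi\<^sub>M (N - A) M)"
    and X: "X \<in> sets (Pi\<^sub>M (N - A) M)" and C: "C \<in> sets (Pi\<^sub>M A M)"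
  shows "emeasure (density (Pi\<^sub>M N M) T) {x \<in> space (Pi\<^sub>M N M). restrict x (N - A) \<in> X \<and> restrict x A \<in> C} =
    (\<integral>\<^sup>+ xa. Q xa * (emeasure (density (Pi\<^sub>M (N - A) M) (F xa)) X * indicator C xa) \<partial>Pi\<^sub>M A M)"
    (is "emeasure _ ?S = _")
proof -
  have restrict_A: "(\<lambda>x. restrict x A) \<in> Pi\<^sub>M N M \<rightarrow>\<^sub>M Pi\<^sub>M A M"
    and restrict_B: "(\<lambda>x. restrict x (N - A)) \<in> Pi\<^sub>M N M \<rightarrow>\<^sub>M Pi\<^sub>M (N - A) M"
    using assms(2) by (auto intro: measurable_restrict_subset)
  have "?S = ((\<lambda>x. restrict x (N - A)) -` X \<inter> space (Pi\<^sub>M N M)) \<inter> ((\<lambda>x. restrict x A) -` C \<inter> space (Pi\<^sub>M N M))"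
    by blast
  then have S: "?S \<in> sets (Pi\<^sub>M N M)"
    using measurable_sets[OF restrict_B X] measurable_sets[OF restrict_A C] by auto
  have "emeasure (density (Pi\<^sub>M N M) T) ?S = (\<integral>\<^sup>+ x. T x * indicator ?S x \<partial>Pi\<^sub>M N M)"
    by (rule emeasure_density[OF assms(3) S])
  also have "\<dots> = (\<integral>\<^sup>+ xa. (\<integral>\<^sup>+ y. T (merge A (N - A) (xa, y)) * indicator ?S (merge A (N - A) (xa, y))
      \<partial>Pi\<^sub>M (N - A) M) \<partial>Pi\<^sub>M A M)"
    using S assms(3) by (intro product_nn_integral_fold_complement[OF assms(1,2)] borel_measurable_times_ennreal)
      auto
  also have "\<dots> = (\<integral>\<^sup>+ xa. Q xa * (emeasure (density (Pi\<^sub>M (N - A) M) (F xa)) X * indicator C xa) \<partial>Pi\<^sub>M A M)"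
  proof (rule nn_integral_cong)
    fix xa assume xa: "xa \<in> space (Pi\<^sub>M A M)"
    have "(\<integral>\<^sup>+ y. T (merge A (N - A) (xa, y)) * indicator ?S (merge A (N - A) (xa, y)) \<partial>Pi\<^sub>M (N - A) M) =
        (\<integral>\<^sup>+ y. (Q xa * indicator C xa) * (F xa y * indicator X y) \<partial>Pi\<^sub>M (N - A) M)"
      using merge_complement[OF assms(2) xa] split[OF xa]
      by (intro nn_integral_cong) (auto simp: indicator_def)
    also have "\<dots> = (Q xa * indicator C xa) * (\<integral>\<^sup>+ y. F xa y * indicator X y \<partial>Pi\<^sub>M (N - A) M)"
      using F[OF xa] X by (intro nn_integral_cmult borel_measurable_times_ennreal borel_measurable_indicator)
    also have "\<dots> = Q xa * (emeasure (density (Pi\<^sub>M (N - A) M) (F xa)) X * indicator C xa)"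
      by (simp add: emeasure_density[OF F[OF xa] X] ac_simps)
    finally show "(\<integral>\<^sup>+ y. T (merge A (N - A) (xa, y)) * indicator ?S (merge A (N - A) (xa, y)) \<partial>Pi\<^sub>M (N - A) M) =
        Q xa * (emeasure (density (Pi\<^sub>M (N - A) M) (F xa)) X * indicator C xa)" .
  qed
  finally show ?thesis .
qed

lemma borel_measurable_marginal_complement:
  assumes "finite N" "A \<subseteq> N" "p \<in> borel_measurable (Pi\<^sub>M N M)"
  shows "(\<lambda>xa. \<integral>\<^sup>+ y. p (merge A (N - A) (xa, y)) \<partial>Pi\<^sub>M (N - A) M) \<in> borel_measurable (Pi\<^sub>M A M)"
proof -
  interpret B: sigma_finite_measure "Pi\<^sub>M (N - A) M"
    using assms(1) by (intro sigma_finite) auto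
  show ?thesis
    using measurable_compose[OF measurable_merge_complement[OF assms(2)] assms(3)]
    by (intro B.borel_measurable_nn_integral) (simp add: split_beta')
qed

lemma distr_restrict_density:
  assumes "finite N" "A \<subseteq> N" "p \<in> borel_measurable (Pi\<^sub>M N M)"
  shows "distr (density (Pi\<^sub>M N M) p) (Pi\<^sub>M A M) (\<lambda>x. restrict x A) =
    density (Pi\<^sub>M A M) (\<lambda>xa. \<integral>\<^sup>+ y. p (merge A (N - A) (xa, y)) \<partial>Pi\<^sub>M (N - A) M)"
    (is "_ = density _ ?q")
proof (rule measure_eqI)
  fix C assume "C \<in> sets (distr (density (Pi\<^sub>M N M) p) (Pi\<^sub>M A M) (\<lambda>x. restrict x A))"
  then have C: "C \<in> sets (Pi\<^sub>M A M)" by simp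
  have p_merge: "(\<lambda>y. p (merge A (N - A) (xa, y))) \<in> borel_measurable (Pi\<^sub>M (N - A) M)"
    if "xa \<in> space (Pi\<^sub>M A M)" for xa
    using measurable_merge_complement_Pair[OF assms(2) that] assms(3) by (rule measurable_compose)
  have "(\<lambda>x. restrict x A) -` C \<inter> space (Pi\<^sub>M N M) =
      {x \<in> space (Pi\<^sub>M N M). restrict x (N - A) \<in> space (Pi\<^sub>M (N - A) M) \<and> restrict x A \<in> C}"
    using measurable_space[OF measurable_restrict_subset[of "N - A" N M]] by auto
  then have "emeasure (distr (density (Pi\<^sub>M N M) p) (Pi\<^sub>M A M) (\<lambda>x. restrict x A)) C =
      emeasure (density (Pi\<^sub>M N M) p)
        {x \<in> space (Pi\<^sub>M N M). restrict x (N - A) \<in> space (Pi\<^sub>M (N - A) M) \<and> restrict x A \<in> C}"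
    using C assms(2) by (subst emeasure_distr) (auto intro: measurable_restrict_subset)
  also have "\<dots> = (\<integral>\<^sup>+ xa. 1 * (emeasure (density (Pi\<^sub>M (N - A) M) (\<lambda>y. p (merge A (N - A) (xa, y))))
        (space (Pi\<^sub>M (N - A) M)) * indicator C xa) \<partial>Pi\<^sub>M A M)"
    using p_merge
    by (intro emeasure_density_cylinder[OF assms, where Q="\<lambda>_. 1" and F="\<lambda>xa y. p (merge A (N - A) (xa, y))"] C)
      auto
  also have "\<dots> = (\<integral>\<^sup>+ xa. ?q xa * indicator C xa \<partial>Pi\<^sub>M A M)"
    using p_merge by (intro nn_integral_cong) (auto simp: emeasure_density intro!: nn_integral_cong)
  also have "\<dots> = emeasure (density (Pi\<^sub>M A M) ?q) C"
    using borel_measurable_marginal_complement[OF assms] C by (rule emeasure_density[symmetric])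
  finally show "emeasure (distr (density (Pi\<^sub>M N M) p) (Pi\<^sub>M A M) (\<lambda>x. restrict x A)) C =
      emeasure (density (Pi\<^sub>M A M) ?q) C" .
qed simp

lemma cond_version_if_density_split:
  assumes "finite N" "A \<subseteq> N" "T \<in> borel_measurable (Pi\<^sub>M N M)" "Q \<in> borel_measurable (Pi\<^sub>M A M)"
    and split: "\<And>xa y. xa \<in> space (Pi\<^sub>M A M) \<Longrightarrow> y \<in> space (Pi\<^sub>M (N - A) M) \<Longrightarrow>
      T (merge A (N - A) (xa, y)) = Q xa * F xa y"
    and F: "\<And>xa. xa \<in> space (Pi\<^sub>M A M) \<Longrightarrow> F xa \<in> borel_measurable (Pi\<^sub>M (N - A) M)"
      "\<And>xa. xa \<in> space (Pi\<^sub>M A M) \<Longrightarrow> (\<integral>\<^sup>+ y. F xa y \<partial>Pi\<^sub>M (N - A) M) = 1"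
    and K: "K \<in> Pi\<^sub>M A M \<rightarrow>\<^sub>M prob_algebra (Pi\<^sub>M (N - A) M)"
      "\<And>xa. xa \<in> space (Pi\<^sub>M A M) \<Longrightarrow> K xa = density (Pi\<^sub>M (N - A) M) (F xa)"
  shows "cond_version M N A (density (Pi\<^sub>M N M) T) K"
  unfolding cond_version_def
proof (intro conjI ballI)
  have marginal_eq: "(\<integral>\<^sup>+ y. T (merge A (N - A) (xa, y)) \<partial>Pi\<^sub>M (N - A) M) = Q xa"
    if "xa \<in> space (Pi\<^sub>M A M)" for xa
  proof -
    have "(\<integral>\<^sup>+ y. T (merge A (N - A) (xa, y)) \<partial>Pi\<^sub>M (N - A) M) = (\<integral>\<^sup>+ y. Q xa * F xa y \<partial>Pi\<^sub>M (N - A) M)"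
      using split[OF that] by (intro nn_integral_cong) simp
    also have "\<dots> = Q xa" using F[OF that] by (simp add: nn_integral_cmult)
    finally show ?thesis .
  qed
  have marginal: "distr (density (Pi\<^sub>M N M) T) (Pi\<^sub>M A M) (\<lambda>x. restrict x A) = density (Pi\<^sub>M A M) Q"
    unfolding distr_restrict_density[OF assms(1-3)]
    using assms(4) by (intro density_cong AE_I2) (simp_all add: marginal_eq measurable_cong[OF marginal_eq])
  fix X C assume X: "X \<in> sets (Pi\<^sub>M (N - A) M)" and C: "C \<in> sets (Pi\<^sub>M A M)"
  have g: "(\<lambda>xa. emeasure (K xa) X * indicator C xa) \<in> borel_measurable (Pi\<^sub>M A M)"
    using measurable_compose[OF measurable_prob_algebraD[OF K(1)] measurable_emeasure_subprob_algebra[OF X]] C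
    by (intro borel_measurable_times_ennreal borel_measurable_indicator)
  have "emeasure (density (Pi\<^sub>M N M) T) {x \<in> space (Pi\<^sub>M N M). restrict x (N - A) \<in> X \<and> restrict x A \<in> C} =
      (\<integral>\<^sup>+ xa. Q xa * (emeasure (density (Pi\<^sub>M (N - A) M) (F xa)) X * indicator C xa) \<partial>Pi\<^sub>M A M)"
    by (rule emeasure_density_cylinder[OF assms(1-3) split F(1) X C])
  also have "\<dots> = (\<integral>\<^sup>+ xa. Q xa * (emeasure (K xa) X * indicator C xa) \<partial>Pi\<^sub>M A M)"
    by (intro nn_integral_cong) (simp add: K(2))
  also have "\<dots> = (\<integral>\<^sup>+ xa. emeasure (K xa) X * indicator C xa
      \<partial>distr (density (Pi\<^sub>M N M) T) (Pi\<^sub>M A M) (\<lambda>x. restrict x A))"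
    unfolding marginal by (rule nn_integral_density[OF assms(4) g, symmetric])
  finally show "emeasure (density (Pi\<^sub>M N M) T) {x \<in> space (Pi\<^sub>M N M). restrict x (N - A) \<in> X \<and> restrict x A \<in> C} =
      (\<integral>\<^sup>+ xa. emeasure (K xa) X * indicator C xa \<partial>distr (density (Pi\<^sub>M N M) T) (Pi\<^sub>M A M) (\<lambda>x. restrict x A))" .
qed (rule K(1))

lemma ex_cond_version_in_KG_if_in_PG:
  assumes "finite N" "is_dag N E" "A \<subseteq> N" "\<forall>s\<in>A. pa E s \<subseteq> A" "in_PG M N E P"
  shows "\<exists>K. in_KG M N (E - {(s, t). (s, t) \<in> E \<and> s \<in> A \<and> t \<in> A}) A K \<and> cond_version M N A P K"
proof -
  let ?H = "E - {(s, t). (s, t) \<in> E \<and> s \<in> A \<and> t \<in> A}"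
  obtain k where k: "\<forall>s\<in>N. kernel_fun_on M (pa E s) s (k s)"
    and P: "P = density (Pi\<^sub>M N M) (kernel_prod k (pa E) N)"
    using assms(5) unfolding in_PG_iff_kernel_prod by blast
  have E: "E \<subseteq> N \<times> N" "acyclic E" using assms(2) by (auto simp: is_dag_def)
  then have pa_N: "pa E s \<subseteq> N" for s by (auto simp: pa_def)
  have pa_H: "pa ?H s = pa E s" if "s \<notin> A" for s using that by (auto simp: pa_def)
  define F where "F xa y = kernel_prod k (pa E) (N - A) (merge A (N - A) (xa, y))" for xa y
  define K where "K xa = density (Pi\<^sub>M (N - A) M) (F xa)" for xa
  have K: "K \<in> Pi\<^sub>M A M \<rightarrow>\<^sub>M prob_algebra (Pi\<^sub>M (N - A) M)"
    unfolding K_def F_def using assms(1,3) E(2) k pa_N by (intro measurable_kernel_prod_density) auto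
  have "kernel_prod k (pa ?H) (N - A) = kernel_prod k (pa E) (N - A)"
    unfolding kernel_prod_def using pa_H by (intro ext prod.cong) auto
  then have KG: "in_KG M N ?H A K"
    unfolding in_KG_iff_kernel_prod
    using K k pa_H by (intro conjI exI[of _ k] ballI) (auto simp: K_def F_def[abs_def])
  have "cond_version M N A P K"
    unfolding P
  proof (rule cond_version_if_density_split[OF assms(1,3) _ _ _ _ _ K])
    show "kernel_prod k (pa E) N \<in> borel_measurable (Pi\<^sub>M N M)"
      using k pa_N by (intro borel_measurable_kernel_prod[OF _ measurable_ident_sets[OF refl]]) auto
    show "kernel_prod k (pa E) A \<in> borel_measurable (Pi\<^sub>M A M)"
      using k pa_N assms(3,4) by (intro borel_measurable_kernel_prod[OF _ measurable_ident_sets[OF refl]]) auto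
    show "kernel_prod k (pa E) N (merge A (N - A) (xa, y)) = kernel_prod k (pa E) A xa * F xa y" for xa y
      using kernel_prod_merge_split[of A "N - A" "pa E" k xa y] assms(1,3,4) finite_subset[OF assms(3)]
      by (simp add: F_def Un_absorb1)
    fix xa assume xa: "xa \<in> space (Pi\<^sub>M A M)"
    show "F xa \<in> borel_measurable (Pi\<^sub>M (N - A) M)"
      unfolding F_def using k pa_N
      by (intro borel_measurable_kernel_prod[OF _ measurable_merge_complement_Pair[OF assms(3) xa]]) auto
    show "(\<integral>\<^sup>+ y. F xa y \<partial>Pi\<^sub>M (N - A) M) = 1"
      unfolding F_def using assms(1,3) E(2) k pa_N xa by (intro nn_integral_kernel_prod_merge) auto
  qed (simp add: K_def)
  with KG show ?thesis by blast
qed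

lemma density_eq_if_cond_version:
  assumes "finite N" "A \<subseteq> N" "p \<in> borel_measurable (Pi\<^sub>M N M)" "prob_space (density (Pi\<^sub>M N M) p)"
    and cond: "cond_version M N A (density (Pi\<^sub>M N M) p) K"
    and "T \<in> borel_measurable (Pi\<^sub>M N M)"
    and split: "\<And>xa y. xa \<in> space (Pi\<^sub>M A M) \<Longrightarrow> y \<in> space (Pi\<^sub>M (N - A) M) \<Longrightarrow>
      T (merge A (N - A) (xa, y)) = Q xa * F xa y"
    and F: "\<And>xa. xa \<in> space (Pi\<^sub>M A M) \<Longrightarrow> F xa \<in> borel_measurable (Pi\<^sub>M (N - A) M)"
    and K: "\<And>xa. xa \<in> space (Pi\<^sub>M A M) \<Longrightarrow> K xa = density (Pi\<^sub>M (N - A) M) (F xa)"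
    and Q: "AE xa in Pi\<^sub>M A M. (\<integral>\<^sup>+ y. p (merge A (N - A) (xa, y)) \<partial>Pi\<^sub>M (N - A) M) = Q xa"
  shows "density (Pi\<^sub>M N M) p = density (Pi\<^sub>M N M) T"
proof (rule measure_eqI_PiM_finite[OF assms(1), where A="\<lambda>_. space (Pi\<^sub>M N M)"])
  fix Y assume Y: "\<And>i. i \<in> N \<Longrightarrow> Y i \<in> sets (M i)"
  have XB: "Pi\<^sub>E (N - A) Y \<in> sets (Pi\<^sub>M (N - A) M)" and XA: "Pi\<^sub>E A Y \<in> sets (Pi\<^sub>M A M)"
    using Y assms(1,2) finite_subset by (auto intro!: sets_PiM_I_finite)
  have g: "(\<lambda>xa. emeasure (K xa) (Pi\<^sub>E (N - A) Y) * indicator (Pi\<^sub>E A Y) xa) \<in> borel_measurable (Pi\<^sub>M A M)"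
    using cond unfolding cond_version_def
    using measurable_compose[OF measurable_prob_algebraD measurable_emeasure_subprob_algebra[OF XB]] XA
    by (intro borel_measurable_times_ennreal borel_measurable_indicator) auto
  have cylinder: "Pi\<^sub>E N Y = {x \<in> space (Pi\<^sub>M N M). restrict x (N - A) \<in> Pi\<^sub>E (N - A) Y \<and> restrict x A \<in> Pi\<^sub>E A Y}"
    using Y assms(2) sets.sets_into_space by (intro PiE_eq_cylinder) blast+
  have "emeasure (density (Pi\<^sub>M N M) p) (Pi\<^sub>E N Y) =
      (\<integral>\<^sup>+ xa. emeasure (K xa) (Pi\<^sub>E (N - A) Y) * indicator (Pi\<^sub>E A Y) xa
        \<partial>distr (density (Pi\<^sub>M N M) p) (Pi\<^sub>M A M) (\<lambda>x. restrict x A))"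
    using cond XB XA unfolding cond_version_def cylinder by blast
  also have "\<dots> = (\<integral>\<^sup>+ xa. (\<integral>\<^sup>+ y. p (merge A (N - A) (xa, y)) \<partial>Pi\<^sub>M (N - A) M) *
      (emeasure (K xa) (Pi\<^sub>E (N - A) Y) * indicator (Pi\<^sub>E A Y) xa) \<partial>Pi\<^sub>M A M)"
    unfolding distr_restrict_density[OF assms(1-3)]
    by (rule nn_integral_density[OF borel_measurable_marginal_complement[OF assms(1-3)] g])
  also have "\<dots> = (\<integral>\<^sup>+ xa. Q xa * (emeasure (K xa) (Pi\<^sub>E (N - A) Y) * indicator (Pi\<^sub>E A Y) xa) \<partial>Pi\<^sub>M A M)"
    using Q by (intro nn_integral_cong_AE) auto
  also have "\<dots> = (\<integral>\<^sup>+ xa. Q xa * (emeasure (density (Pi\<^sub>M (N - A) M) (F xa)) (Pi\<^sub>E (N - A) Y) *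
      indicator (Pi\<^sub>E A Y) xa) \<partial>Pi\<^sub>M A M)"
    by (intro nn_integral_cong) (simp add: K)
  also have "\<dots> = emeasure (density (Pi\<^sub>M N M) T) (Pi\<^sub>E N Y)"
    unfolding cylinder by (rule emeasure_density_cylinder[OF assms(1,2,6) split F XB XA, symmetric])
  finally show "emeasure (density (Pi\<^sub>M N M) p) (Pi\<^sub>E N Y) = emeasure (density (Pi\<^sub>M N M) T) (Pi\<^sub>E N Y)" .
next
  show "range (\<lambda>_. space (Pi\<^sub>M N M)) \<subseteq> prod_algebra N M"
    using prod_algebraI_finite[OF assms(1), of "\<lambda>i. space (M i)" M] by (auto simp: space_PiM)
  show "emeasure (density (Pi\<^sub>M N M) p) (space (Pi\<^sub>M N M)) \<noteq> \<infinity>"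
    using prob_space.emeasure_space_1[OF assms(4)] by simp
qed simp_all

lemma in_PG_if_cond_version_in_KG:
  assumes "finite N" "p \<in> borel_measurable (Pi\<^sub>M N M)" "P = density (Pi\<^sub>M N M) p" "prob_space P"
    and "is_dag N E" "topo_order N E ord" "A \<subseteq> roots N E" "in_KG M N E A K" "cond_version M N A P K"
  shows "in_PG M N (E \<union> {(s, t). s \<in> A \<and> t \<in> A \<and> ord s < ord t}) P"
proof -
  let ?H = "E \<union> {(s, t). s \<in> A \<and> t \<in> A \<and> ord s < ord t}"
  let ?pred = "\<lambda>s. {u\<in>A. ord u < ord s}"
  let ?q = "\<lambda>xa. \<integral>\<^sup>+ y. p (merge A (N - A) (xa, y)) \<partial>Pi\<^sub>M (N - A) M"
  have A: "A \<subseteq> N" "\<forall>s\<in>A. pa E s = {}" using assms(7) by (auto simp: roots_def)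
  have "E \<subseteq> N \<times> N" using assms(5) by (simp add: is_dag_def)
  then have pa_N: "pa E s \<subseteq> N" for s by (auto simp: pa_def)
  have pa_H: "pa ?H s = (if s \<in> A then ?pred s else pa E s)" for s
    using A(2) by (auto simp: pa_def)
  obtain k where k: "\<forall>s\<in>N - A. kernel_fun_on M (pa E s) s (k s)"
    and K: "\<forall>xa\<in>space (Pi\<^sub>M A M).
      K xa = density (Pi\<^sub>M (N - A) M) (\<lambda>y. kernel_prod k (pa E) (N - A) (merge A (N - A) (xa, y)))"
    using assms(8) unfolding in_KG_iff_kernel_prod by blast
  have "(\<integral>\<^sup>+ xa. ?q xa \<partial>Pi\<^sub>M A M) = (\<integral>\<^sup>+ x. p x \<partial>Pi\<^sub>M N M)"
    using product_nn_integral_fold_complement[OF assms(1) A(1) assms(2)] ..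
  also have "\<dots> = emeasure P (space P)"
    unfolding assms(3) using assms(2) by (auto simp: emeasure_density intro!: nn_integral_cong)
  finally have q_1: "(\<integral>\<^sup>+ xa. ?q xa \<partial>Pi\<^sub>M A M) = 1"
    using prob_space.emeasure_space_1[OF assms(4)] by simp
  have "inj_on ord A"
    using assms(6) A(1) unfolding topo_order_def by (meson bij_betw_imp_inj_on inj_on_subset)
  then obtain kA where kA: "\<forall>s\<in>A. kernel_fun_on M (?pred s) s (kA s)"
    and q_eq: "AE xa in Pi\<^sub>M A M. ?q xa = kernel_prod kA ?pred A xa"
    using density_chain_rule[OF finite_subset[OF A(1) assms(1)] _
        borel_measurable_marginal_complement[OF assms(1) A(1) assms(2)] q_1] by blast
  define k' where "k' s = (if s \<in> A then kA s else k s)" for s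
  have k': "\<forall>s\<in>N. kernel_fun_on M (pa ?H s) s (k' s)"
    using k kA by (simp add: pa_H k'_def)
  have "P = density (Pi\<^sub>M N M) (kernel_prod k' (pa ?H) N)"
    unfolding assms(3)
  proof (rule density_eq_if_cond_version[OF assms(1) A(1) assms(2) _ _ _ _ _ _ q_eq])
    show "kernel_prod k' (pa ?H) N \<in> borel_measurable (Pi\<^sub>M N M)"
      using k' pa_N A(1) by (intro borel_measurable_kernel_prod[OF _ measurable_ident_sets[OF refl]])
        (auto simp: pa_H)
    show "kernel_prod k' (pa ?H) N (merge A (N - A) (xa, y)) =
        kernel_prod kA ?pred A xa * kernel_prod k (pa E) (N - A) (merge A (N - A) (xa, y))" for xa y
    proof -
      have "kernel_prod k' (pa ?H) N (merge A (N - A) (xa, y)) =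
          kernel_prod k' (pa ?H) A xa * kernel_prod k' (pa ?H) (N - A) (merge A (N - A) (xa, y))"
        using kernel_prod_merge_split[of A "N - A" "pa ?H" k' xa y] assms(1) A(1) finite_subset[OF A(1)]
        by (simp add: Un_absorb1 pa_H)
      moreover have "kernel_prod k' (pa ?H) A xa = kernel_prod kA ?pred A xa"
        unfolding kernel_prod_def by (intro prod.cong) (auto simp: k'_def pa_H)
      moreover have "kernel_prod k' (pa ?H) (N - A) w = kernel_prod k (pa E) (N - A) w" for w
        unfolding kernel_prod_def by (intro prod.cong) (auto simp: k'_def pa_H)
      ultimately show ?thesis by simp
    qed
    fix xa assume xa: "xa \<in> space (Pi\<^sub>M A M)"
    show "(\<lambda>y. kernel_prod k (pa E) (N - A) (merge A (N - A) (xa, y))) \<in> borel_measurable (Pi\<^sub>M (N - A) M)"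
      using k pa_N by (intro borel_measurable_kernel_prod[OF _ measurable_merge_complement_Pair[OF A(1) xa]]) auto
    show "K xa = density (Pi\<^sub>M (N - A) M) (\<lambda>y. kernel_prod k (pa E) (N - A) (merge A (N - A) (xa, y)))"
      using K xa by blast
  qed (use assms(3,4,9) in simp_all)
  with assms(4) k' show ?thesis unfolding in_PG_iff_kernel_prod by blast
qed

end

section \<open>Reduction to products of sigma-finite measures\<close>

lemma sigma_finite_embed_measure_inj_on:
  assumes "sigma_finite_measure M" and inj: "inj_on f (space M)"
  shows "sigma_finite_measure (embed_measure M f)"
proof -
  from assms(1) interpret sigma_finite_measure M .
  obtain A where A: "countable A" "A \<subseteq> sets M" "\<Union>A = space M" "\<And>X. X \<in> A \<Longrightarrow> emeasure M X \<noteq> \<infinity>"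
    using sigma_finite_countable by blast
  show ?thesis
  proof (standard, intro exI conjI ballI)
    show "countable ((`) f ` A)" "(`) f ` A \<subseteq> sets (embed_measure M f)"
      using A inj by (auto simp: sets_embed_measure')
    show "\<Union>((`) f ` A) = space (embed_measure M f)"
      unfolding space_embed_measure A(3)[symmetric] by blast
    fix Y assume "Y \<in> (`) f ` A"
    then obtain X where X: "X \<in> A" "Y = f ` X" by auto
    have "f -` f ` X \<inter> space M = X" using X A inj by (auto dest: inj_onD)
    then show "emeasure (embed_measure M f) Y \<noteq> \<infinity>"
      using X A inj by (subst emeasure_embed_measure') (auto intro: in_sets_embed_measure)
  qed
qed

lemma state_space_sigma_finite: "state_space M \<Longrightarrow> sigma_finite_measure M"
  unfolding state_space_def
proof (elim disjE exE conjE)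
  fix F assume "finite F" "M = count_space F"
  then show ?thesis
    by (simp add: finite_measure.sigma_finite_measure finite_measure_count_space)
next
  fix d :: nat and f :: "(nat \<Rightarrow> real) \<Rightarrow> 'a"
  assume f: "inj_on f (space (Pi\<^sub>M {..<d} (\<lambda>_. lborel)))"
    and M: "M = embed_measure (Pi\<^sub>M {..<d} (\<lambda>_. lborel)) f"
  interpret product_sigma_finite "\<lambda>_::nat. lborel :: real measure" ..
  have "sigma_finite_measure (Pi\<^sub>M {..<d} (\<lambda>_. lborel :: real measure))"
    by (rule sigma_finite) simp
  from this f show ?thesis
    unfolding M by (rule sigma_finite_embed_measure_inj_on)
qed

lemma product_sigma_finite_extend:
  fixes M :: "'i \<Rightarrow> 'a measure"
  assumes "\<forall>i\<in>N. sigma_finite_measure (M i)"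
  shows "product_sigma_finite (\<lambda>i. if i \<in> N then M i else count_space {})"
proof (rule product_sigma_finite.intro)
  fix i
  have "sigma_finite_measure (count_space ({} :: 'a set))"
    by (simp add: finite_measure.sigma_finite_measure finite_measure_count_space)
  then show "sigma_finite_measure (if i \<in> N then M i else count_space {})"
    using assms by (cases "i \<in> N") auto
qed

lemma in_PG_cong:
  assumes "\<forall>i\<in>N. M' i = M i" "E \<subseteq> N \<times> N"
  shows "in_PG M' N E P \<longleftrightarrow> in_PG M N E P"
proof -
  have "pa E s \<subseteq> N" for s using assms(2) by (auto simp: pa_def)
  then have "Pi\<^sub>M (pa E s) M' = Pi\<^sub>M (pa E s) M" "Pi\<^sub>M N M' = Pi\<^sub>M N M" for s
    using assms(1) by (auto intro!: PiM_cong)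
  with assms(1) show ?thesis
    unfolding in_PG_def kernel_fun_def by (intro conj_cong ex_cong) (auto cong: conj_cong)
qed

lemma in_KG_cong:
  assumes "\<forall>i\<in>N. M' i = M i" "E \<subseteq> N \<times> N" "A \<subseteq> N"
  shows "in_KG M' N E A K \<longleftrightarrow> in_KG M N E A K"
proof -
  have "pa E s \<subseteq> N" for s using assms(2) by (auto simp: pa_def)
  then have "Pi\<^sub>M (pa E s) M' = Pi\<^sub>M (pa E s) M" "Pi\<^sub>M A M' = Pi\<^sub>M A M" "Pi\<^sub>M (N - A) M' = Pi\<^sub>M (N - A) M" for s
    using assms(1,3) by (auto intro!: PiM_cong)
  with assms(1) show ?thesis
    unfolding in_KG_def kernel_fun_def by (intro conj_cong ex_cong) (auto cong: conj_cong)
qed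

lemma cond_version_cong:
  assumes "\<forall>i\<in>N. M' i = M i" "A \<subseteq> N"
  shows "cond_version M' N A P K \<longleftrightarrow> cond_version M N A P K"
proof -
  have "Pi\<^sub>M A M' = Pi\<^sub>M A M" "Pi\<^sub>M (N - A) M' = Pi\<^sub>M (N - A) M" "Pi\<^sub>M N M' = Pi\<^sub>M N M"
    using assms by (auto intro!: PiM_cong)
  then show ?thesis unfolding cond_version_def by simp
qed

theorem lemma3:
  fixes N :: "'n set" and M :: "'n \<Rightarrow> 'x measure" and P :: "('n \<Rightarrow> 'x) measure"
  assumes "finite N"
    and "\<forall>s\<in>N. state_space (M s)"
    and "prob_space P"
    and "\<exists>p \<in> borel_measurable (Pi\<^sub>M N M). P = density (Pi\<^sub>M N M) p"
  shows
    "(\<forall>E ord A K. is_dag N E \<and> topo_order N E ord \<and> A \<subseteq> roots N E \<and>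
        in_KG M N E A K \<and> cond_version M N A P K
        \<longrightarrow> in_PG M N (E \<union> {(s, t). s \<in> A \<and> t \<in> A \<and> ord s < ord t}) P)
     \<and>
     (\<forall>E A. is_dag N E \<and> A \<subseteq> N \<and> (\<forall>s\<in>A. pa E s \<subseteq> A) \<and> in_PG M N E P
        \<longrightarrow> (\<exists>K. in_KG M N (E - {(s, t). (s, t) \<in> E \<and> s \<in> A \<and> t \<in> A}) A K
                  \<and> cond_version M N A P K))"
proof -
  \<comment> \<open>The product measure theory needs sigma-finite factors at every index, also outside N.\<close>
  define M' where "M' i = (if i \<in> N then M i else count_space {})" for i
  have "\<forall>s\<in>N. sigma_finite_measure (M s)" using assms(2) state_space_sigma_finite by blast
  then interpret product_sigma_finite M'
    unfolding M'_def[abs_def] by (rule product_sigma_finite_extend)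
  have M': "\<forall>i\<in>N. M' i = M i" by (simp add: M'_def)
  have "Pi\<^sub>M N M' = Pi\<^sub>M N M" by (rule PiM_cong) (simp_all add: M')
  then obtain p where p: "p \<in> borel_measurable (Pi\<^sub>M N M')" "P = density (Pi\<^sub>M N M') p"
    using assms(4) by auto
  show ?thesis
  proof (intro conjI allI impI; elim conjE)
    fix E ord A K
    assume E: "is_dag N E" "topo_order N E ord" "A \<subseteq> roots N E" "in_KG M N E A K" "cond_version M N A P K"
    then have EN: "E \<subseteq> N \<times> N" and AN: "A \<subseteq> N" by (auto simp: is_dag_def roots_def)
    then have HN: "E \<union> {(s, t). s \<in> A \<and> t \<in> A \<and> ord s < ord t} \<subseteq> N \<times> N" by blast
    have "in_PG M' N (E \<union> {(s, t). s \<in> A \<and> t \<in> A \<and> ord s < ord t}) P"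
      using E(1-3) E(4)[folded in_KG_cong[OF M' EN AN]] E(5)[folded cond_version_cong[OF M' AN]]
      by (rule in_PG_if_cond_version_in_KG[OF assms(1) p assms(3)])
    then show "in_PG M N (E \<union> {(s, t). s \<in> A \<and> t \<in> A \<and> ord s < ord t}) P"
      unfolding in_PG_cong[OF M' HN] .
  next
    fix E A
    assume E: "is_dag N E" "A \<subseteq> N" "\<forall>s\<in>A. pa E s \<subseteq> A" "in_PG M N E P"
    then have EN: "E \<subseteq> N \<times> N" by (simp add: is_dag_def)
    then have HN: "E - {(s, t). (s, t) \<in> E \<and> s \<in> A \<and> t \<in> A} \<subseteq> N \<times> N" by blast
    obtain K where "in_KG M' N (E - {(s, t). (s, t) \<in> E \<and> s \<in> A \<and> t \<in> A}) A K" "cond_version M' N A P K"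
      using ex_cond_version_in_KG_if_in_PG[OF assms(1) E(1-3) E(4)[folded in_PG_cong[OF M' EN]]] by blast
    then show "\<exists>K. in_KG M N (E - {(s, t). (s, t) \<in> E \<and> s \<in> A \<and> t \<in> A}) A K \<and> cond_version M N A P K"
      unfolding in_KG_cong[OF M' HN E(2)] cond_version_cong[OF M' E(2)] by blast
  qed
qed

end
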